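(* Let $\mathcal{U}$ be an age, let $\mathcal{C}\subseteq\mathcal{U}$ be a Fraïssé class whose Fraïssé limit is locally finite and has an oligomorphic automorphism group, let $\mathbf{T}\in\overline{\mathcal{U}}$, and let $u:\mathbf{V}\to\mathbf{T}$ be a universal homogeneous homomorphism to $\mathbf{T}$ within $\overline{\mathcal{C}}$. If $\operatorname{Aut}(\mathbf{T})$ is oligomorphic, then $\operatorname{Aut}(\mathbf{V})$ is oligomorphic.
   Context: An embedding is an injective homomorphism reflecting all relations. An age is a class of finitely generated structures of one signature with countably many isomorphism types, closed under finitely generated substructures (up to isomorphism) and with the joint embedding property; for an age $\mathcal{C}$, $\overline{\mathcal{C}}$ is the class of countable structures all of whose finitely generated substructures are isomorphic to members of $\mathcal{C}$. A Fraïssé class is an age with the amalgamation property, and its Fraïssé limit is the unique countable homogeneous structure (every isomorphism between finitely generated substructures extends to an automorphism) with that age. A structure is locally finite if all finitely generated substructures are finite. A permutation group on $\Omega$ is oligomorphic if for every $n\ge1$ its coordinatewise action on $\Omega^n$ has finitely many orbits. For $\mathbf{V}\in\overline{\mathcal{C}}$ and a countable $\mathbf{T}$, a homomorphism $u:\mathbf{V}\to\mathbf{T}$ is universal within $\overline{\mathcal{C}}$ if for every $\mathbf{A}\in\overline{\mathcal{C}}$ and homomorphism $h:\mathbf{A}\to\mathbf{T}$ there is an embedding $\iota:\mathbf{A}\hookrightarrow\mathbf{V}$ with $h=u\circ\iota$; homogeneous if for every finitely generated $\mathbf{A}\le\mathbf{V}$ and embedding $\iota:\mathbf{A}\hookrightarrow\mathbf{V}$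 with $u\circ\iota=u\restriction_A$ there is an automorphism $\alpha$ of $\mathbf{V}$ with $u\circ\alpha=u$ and $\alpha\restriction_A=\iota$. *)

theory Defs
  imports Main "HOL-Library.Countable_Set"
begin

record ('r, 'f) signature =
  rar :: "'r \<Rightarrow> nat"
  far :: "'f \<Rightarrow> nat"

(* A structure with carrier a subset of nat (so every structure considered is countable;
   classes of structures are handled up to isomorphism). Only the values of rel/fn on
   tuples from the universe of the right arity matter. *)
record ('r, 'f) struc =
  univ :: "nat set"
  rel :: "'r \<Rightarrow> nat list \<Rightarrow> bool"
  fn :: "'f \<Rightarrow> nat list \<Rightarrow> nat"

definition tuples :: "nat set \<Rightarrow> nat \<Rightarrow> nat list set" where
  "tuples S n = {xs. length xs = n \<and> set xs \<subseteq> S}"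

definition closed_set :: "('r,'f) signature \<Rightarrow> ('r,'f) struc \<Rightarrow> nat set \<Rightarrow> bool" where
  "closed_set \<sigma> A S \<longleftrightarrow> (\<forall>f. \<forall>xs\<in>tuples S (far \<sigma> f). fn A f xs \<in> S)"

definition is_struc :: "('r,'f) signature \<Rightarrow> ('r,'f) struc \<Rightarrow> bool" where
  "is_struc \<sigma> A \<longleftrightarrow> closed_set \<sigma> A (univ A)"

definition hom :: "('r,'f) signature \<Rightarrow> ('r,'f) struc \<Rightarrow> ('r,'f) struc \<Rightarrow> (nat \<Rightarrow> nat) \<Rightarrow> bool" where
  "hom \<sigma> A B h \<longleftrightarrow>
     (\<forall>x\<in>univ A. h x \<in> univ B) \<and>
     (\<forall>R. \<forall>xs\<in>tuples (univ A) (rar \<sigma> R). rel A R xs \<longrightarrow> rel B R (map h xs)) \<and>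
     (\<forall>f. \<forall>xs\<in>tuples (univ A) (far \<sigma> f). h (fn A f xs) = fn B f (map h xs))"

definition emb :: "('r,'f) signature \<Rightarrow> ('r,'f) struc \<Rightarrow> ('r,'f) struc \<Rightarrow> (nat \<Rightarrow> nat) \<Rightarrow> bool" where
  "emb \<sigma> A B h \<longleftrightarrow> hom \<sigma> A B h \<and> inj_on h (univ A) \<and>
     (\<forall>R. \<forall>xs\<in>tuples (univ A) (rar \<sigma> R). rel B R (map h xs) \<longrightarrow> rel A R xs)"

definition iso :: "('r,'f) signature \<Rightarrow> ('r,'f) struc \<Rightarrow> ('r,'f) struc \<Rightarrow> (nat \<Rightarrow> nat) \<Rightarrow> bool" where
  "iso \<sigma> A B h \<longleftrightarrow> emb \<sigma> A B h \<and> h ` univ A = univ B"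

definition isomorphic :: "('r,'f) signature \<Rightarrow> ('r,'f) struc \<Rightarrow> ('r,'f) struc \<Rightarrow> bool" where
  "isomorphic \<sigma> A B \<longleftrightarrow> (\<exists>h. iso \<sigma> A B h)"

definition in_cls :: "('r,'f) signature \<Rightarrow> ('r,'f) struc set \<Rightarrow> ('r,'f) struc \<Rightarrow> bool" where
  "in_cls \<sigma> K A \<longleftrightarrow> (\<exists>B\<in>K. isomorphic \<sigma> A B)"

definition Aut :: "('r,'f) signature \<Rightarrow> ('r,'f) struc \<Rightarrow> (nat \<Rightarrow> nat) set" where
  "Aut \<sigma> A = {\<alpha>. iso \<sigma> A A \<alpha>}"

definition gen :: "('r,'f) signature \<Rightarrow> ('r,'f) struc \<Rightarrow> nat set \<Rightarrow> nat set" where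
  "gen \<sigma> A X = \<Inter>{S. X \<subseteq> S \<and> S \<subseteq> univ A \<and> closed_set \<sigma> A S}"

definition restr :: "('r,'f) struc \<Rightarrow> nat set \<Rightarrow> ('r,'f) struc" where
  "restr A S = A\<lparr>univ := S\<rparr>"

definition gen_sub :: "('r,'f) signature \<Rightarrow> ('r,'f) struc \<Rightarrow> nat set \<Rightarrow> ('r,'f) struc" where
  "gen_sub \<sigma> A X = restr A (gen \<sigma> A X)"

definition fin_gen :: "('r,'f) signature \<Rightarrow> ('r,'f) struc \<Rightarrow> bool" where
  "fin_gen \<sigma> A \<longleftrightarrow> (\<exists>X. finite X \<and> X \<subseteq> univ A \<and> gen \<sigma> A X = univ A)"

definition locally_finite :: "('r,'f) signature \<Rightarrow> ('r,'f) struc \<Rightarrow> bool" where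
  "locally_finite \<sigma> A \<longleftrightarrow> (\<forall>X. finite X \<and> X \<subseteq> univ A \<longrightarrow> finite (gen \<sigma> A X))"

definition age_class :: "('r,'f) signature \<Rightarrow> ('r,'f) struc set \<Rightarrow> bool" where
  "age_class \<sigma> K \<longleftrightarrow>
     (\<forall>A\<in>K. is_struc \<sigma> A \<and> fin_gen \<sigma> A) \<and>
     (\<exists>S\<subseteq>K. countable S \<and> (\<forall>A\<in>K. \<exists>B\<in>S. isomorphic \<sigma> A B)) \<and>
     (\<forall>A\<in>K. \<forall>X. finite X \<and> X \<subseteq> univ A \<longrightarrow> in_cls \<sigma> K (gen_sub \<sigma> A X)) \<and>
     (\<forall>A\<in>K. \<forall>B\<in>K. \<exists>C\<in>K. \<exists>f g. emb \<sigma> A C f \<and> emb \<sigma> B C g)"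

definition amalgamation :: "('r,'f) signature \<Rightarrow> ('r,'f) struc set \<Rightarrow> bool" where
  "amalgamation \<sigma> K \<longleftrightarrow>
     (\<forall>A\<in>K. \<forall>B\<in>K. \<forall>C\<in>K. \<forall>f g. emb \<sigma> A B f \<and> emb \<sigma> A C g \<longrightarrow>
        (\<exists>D\<in>K. \<exists>f' g'. emb \<sigma> B D f' \<and> emb \<sigma> C D g' \<and>
            (\<forall>x\<in>univ A. f' (f x) = g' (g x))))"

definition fraisse_class :: "('r,'f) signature \<Rightarrow> ('r,'f) struc set \<Rightarrow> bool" where
  "fraisse_class \<sigma> K \<longleftrightarrow> age_class \<sigma> K \<and> amalgamation \<sigma> K"

definition cbar :: "('r,'f) signature \<Rightarrow> ('r,'f) struc set \<Rightarrow> ('r,'f) struc \<Rightarrow> bool" where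
  "cbar \<sigma> K A \<longleftrightarrow> is_struc \<sigma> A \<and>
     (\<forall>X. finite X \<and> X \<subseteq> univ A \<longrightarrow> in_cls \<sigma> K (gen_sub \<sigma> A X))"

definition homogeneous_struc :: "('r,'f) signature \<Rightarrow> ('r,'f) struc \<Rightarrow> bool" where
  "homogeneous_struc \<sigma> M \<longleftrightarrow>
     (\<forall>X Y h. finite X \<and> X \<subseteq> univ M \<and> finite Y \<and> Y \<subseteq> univ M \<and>
        iso \<sigma> (gen_sub \<sigma> M X) (gen_sub \<sigma> M Y) h \<longrightarrow>
        (\<exists>\<alpha>\<in>Aut \<sigma> M. \<forall>x\<in>gen \<sigma> M X. \<alpha> x = h x))"

definition age_is :: "('r,'f) signature \<Rightarrow> ('r,'f) struc \<Rightarrow> ('r,'f) struc set \<Rightarrow> bool" where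
  "age_is \<sigma> M K \<longleftrightarrow>
     (\<forall>X. finite X \<and> X \<subseteq> univ M \<longrightarrow> in_cls \<sigma> K (gen_sub \<sigma> M X)) \<and>
     (\<forall>A\<in>K. \<exists>h. emb \<sigma> A M h)"

definition fraisse_limit :: "('r,'f) signature \<Rightarrow> ('r,'f) struc set \<Rightarrow> ('r,'f) struc \<Rightarrow> bool" where
  "fraisse_limit \<sigma> K M \<longleftrightarrow> is_struc \<sigma> M \<and> homogeneous_struc \<sigma> M \<and> age_is \<sigma> M K"

definition oligomorphic :: "nat set \<Rightarrow> (nat \<Rightarrow> nat) set \<Rightarrow> bool" where
  "oligomorphic \<Omega> G \<longleftrightarrow>
     (\<forall>n\<ge>1. finite ((\<lambda>xs. {map g xs | g. g \<in> G}) ` tuples \<Omega> n))"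

definition universal_hom :: "('r,'f) signature \<Rightarrow> ('r,'f) struc set \<Rightarrow> ('r,'f) struc \<Rightarrow>
    ('r,'f) struc \<Rightarrow> (nat \<Rightarrow> nat) \<Rightarrow> bool" where
  "universal_hom \<sigma> K V T u \<longleftrightarrow> cbar \<sigma> K V \<and> is_struc \<sigma> T \<and> hom \<sigma> V T u \<and>
     (\<forall>A h. cbar \<sigma> K A \<and> hom \<sigma> A T h \<longrightarrow>
        (\<exists>\<iota>. emb \<sigma> A V \<iota> \<and> (\<forall>x\<in>univ A. h x = u (\<iota> x))))"

definition homogeneous_hom :: "('r,'f) signature \<Rightarrow> ('r,'f) struc \<Rightarrow>
    ('r,'f) struc \<Rightarrow> (nat \<Rightarrow> nat) \<Rightarrow> bool" where
  "homogeneous_hom \<sigma> V T u \<longleftrightarrow>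
     (\<forall>X \<iota>. finite X \<and> X \<subseteq> univ V \<and> emb \<sigma> (gen_sub \<sigma> V X) V \<iota> \<and>
        (\<forall>x\<in>gen \<sigma> V X. u (\<iota> x) = u x) \<longrightarrow>
        (\<exists>\<alpha>\<in>Aut \<sigma> V. (\<forall>x\<in>univ V. u (\<alpha> x) = u x) \<and> (\<forall>x\<in>gen \<sigma> V X. \<alpha> x = \<iota> x)))"

end

theory Submission
  imports Defs
begin

text \<open>An \<open>n\<close>-tuple \<open>a\<close> of \<open>V\<close> generates a substructure \<open>\<langle>a\<rangle>\<close> that embeds into the
  Fraisse limit \<open>M\<close>; as \<open>M\<close> is locally finite with oligomorphic automorphism group,
  \<open>|\<langle>a\<rangle>|\<close> is bounded in terms of \<open>n\<close> alone. List \<open>\<langle>a\<rangle>\<close> starting with \<open>a\<close>; the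
  \<open>Aut M\<close>-orbit of its image in \<open>M\<close> and the \<open>Aut T\<close>-orbit of its image under \<open>u\<close> range over
  finitely many possibilities. If \<open>a\<close> and \<open>b\<close> give the same two orbits, the witnessing
  automorphisms yield an isomorphism \<open>\<langle>a\<rangle> \<cong> \<langle>b\<rangle>\<close> sending \<open>a\<close> to \<open>b\<close> and lying over some
  \<open>\<beta> \<in> Aut T\<close>. A back-and-forth argument extends it to an automorphism of \<open>V\<close>: universality of
  \<open>u\<close> realises \<open>\<beta>\<close> by a self-embedding of \<open>V\<close>, and homogeneity of \<open>u\<close> corrects that
  embedding to agree with the given partial isomorphism.\<close>

lemma restr_simps [simp]:
  "univ (restr A S) = S" "rel (restr A S) = rel A" "fn (restr A S) = fn A"
  by (simp_all add: restr_def)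

lemma restr_univ [simp]: "restr A (univ A) = A"
  by (simp add: restr_def)

lemma tuples_iff [simp]: "xs \<in> tuples S n \<longleftrightarrow> length xs = n \<and> set xs \<subseteq> S"
  by (simp add: tuples_def)

lemma closed_set_restr [simp]: "closed_set \<sigma> (restr A S) Z = closed_set \<sigma> A Z"
  by (simp add: closed_set_def)

lemma is_struc_restr: "closed_set \<sigma> A S \<Longrightarrow> is_struc \<sigma> (restr A S)"
  by (simp add: is_struc_def)

lemma is_struc_fn: "is_struc \<sigma> A \<Longrightarrow> length xs = far \<sigma> f \<Longrightarrow> set xs \<subseteq> univ A \<Longrightarrow> fn A f xs \<in> univ A"
  by (auto simp: is_struc_def closed_set_def)

lemma gen_least:
  "X \<subseteq> S \<Longrightarrow> S \<subseteq> univ A \<Longrightarrow> closed_set \<sigma> A S \<Longrightarrow> gen \<sigma> A X \<subseteq> S"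
  unfolding gen_def by blast

lemma
  assumes "is_struc \<sigma> A" "X \<subseteq> univ A"
  shows gen_subset_univ: "gen \<sigma> A X \<subseteq> univ A"
    and subset_gen: "X \<subseteq> gen \<sigma> A X"
    and closed_set_gen: "closed_set \<sigma> A (gen \<sigma> A X)"
proof -
  have "univ A \<in> {S. X \<subseteq> S \<and> S \<subseteq> univ A \<and> closed_set \<sigma> A S}"
    using assms by (simp add: is_struc_def)
  then show "gen \<sigma> A X \<subseteq> univ A" unfolding gen_def by blast
  show "X \<subseteq> gen \<sigma> A X" unfolding gen_def by blast
  show "closed_set \<sigma> A (gen \<sigma> A X)"
    unfolding closed_set_def
  proof (intro allI ballI)
    fix f xs assume xs: "xs \<in> tuples (gen \<sigma> A X) (far \<sigma> f)"
    show "fn A f xs \<in> gen \<sigma> A X"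
    proof (unfold gen_def, rule InterI)
      fix S assume S: "S \<in> {S. X \<subseteq> S \<and> S \<subseteq> univ A \<and> closed_set \<sigma> A S}"
      then have "xs \<in> tuples S (far \<sigma> f)"
        using xs unfolding gen_def by auto
      then show "fn A f xs \<in> S" using S by (auto simp: closed_set_def)
    qed
  qed
qed

lemma gen_fn:
  assumes "is_struc \<sigma> A" "X \<subseteq> univ A" "length xs = far \<sigma> f" "set xs \<subseteq> gen \<sigma> A X"
  shows "fn A f xs \<in> gen \<sigma> A X"
  using closed_set_gen[OF assms(1,2)] assms(3,4) by (auto simp: closed_set_def)

lemma gen_mono:
  assumes "is_struc \<sigma> A" "X \<subseteq> Y" "Y \<subseteq> univ A"
  shows "gen \<sigma> A X \<subseteq> gen \<sigma> A Y"
  using assms by (meson gen_least gen_subset_univ subset_gen closed_set_gen order_trans)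

lemma gen_gen_Un:
  assumes "is_struc \<sigma> A" "X \<subseteq> univ A" "Z \<subseteq> univ A"
  shows "gen \<sigma> A (gen \<sigma> A X \<union> Z) = gen \<sigma> A (X \<union> Z)"
proof
  have XZ: "X \<union> Z \<subseteq> univ A" using assms by auto
  have "gen \<sigma> A X \<union> Z \<subseteq> gen \<sigma> A (X \<union> Z)"
    using gen_mono[OF assms(1) _ XZ] subset_gen[OF assms(1) XZ] by auto
  then show "gen \<sigma> A (gen \<sigma> A X \<union> Z) \<subseteq> gen \<sigma> A (X \<union> Z)"
    using gen_least gen_subset_univ[OF assms(1) XZ] closed_set_gen[OF assms(1) XZ] by blast
next
  show "gen \<sigma> A (X \<union> Z) \<subseteq> gen \<sigma> A (gen \<sigma> A X \<union> Z)"
    using subset_gen[OF assms(1,2)] gen_subset_univ[OF assms(1,2)] assms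
    by (intro gen_mono) auto
qed

lemma gen_restr_gen:
  assumes "is_struc \<sigma> A" "X \<subseteq> univ A"
  shows "gen \<sigma> (restr A (gen \<sigma> A X)) X = gen \<sigma> A X"
proof
  show "gen \<sigma> (restr A (gen \<sigma> A X)) X \<subseteq> gen \<sigma> A X"
    by (rule gen_least) (use subset_gen[OF assms] closed_set_gen[OF assms] in auto)
next
  let ?R = "restr A (gen \<sigma> A X)"
  have R: "is_struc \<sigma> ?R" "X \<subseteq> univ ?R"
    using is_struc_restr closed_set_gen[OF assms] subset_gen[OF assms] by auto
  show "gen \<sigma> A X \<subseteq> gen \<sigma> ?R X"
    using gen_least[of X "gen \<sigma> ?R X" A \<sigma>] subset_gen[OF R] gen_subset_univ[OF R]
      closed_set_gen[OF R] gen_subset_univ[OF assms] by auto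
qed

lemma gen_image:
  assumes A: "is_struc \<sigma> A" and B: "is_struc \<sigma> B" and h: "hom \<sigma> A B e" and X: "X \<subseteq> univ A"
  shows "e ` gen \<sigma> A X = gen \<sigma> B (e ` X)"
proof
  have eX: "e ` X \<subseteq> univ B" using h X unfolding hom_def by auto
  define S where "S = {x \<in> univ A. e x \<in> gen \<sigma> B (e ` X)}"
  have "closed_set \<sigma> A S"
    unfolding closed_set_def
  proof (intro allI ballI)
    fix f xs assume xs: "xs \<in> tuples S (far \<sigma> f)"
    then have xsA: "xs \<in> tuples (univ A) (far \<sigma> f)" unfolding S_def by auto
    then have "e (fn A f xs) = fn B f (map e xs)" using h unfolding hom_def by auto
    moreover have "fn B f (map e xs) \<in> gen \<sigma> B (e ` X)"
      using xs by (intro gen_fn[OF B eX]) (auto simp: S_def)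
    ultimately show "fn A f xs \<in> S" using is_struc_fn[OF A] xsA unfolding S_def by auto
  qed
  moreover have "X \<subseteq> S" using X subset_gen[OF B eX] unfolding S_def by auto
  ultimately have "gen \<sigma> A X \<subseteq> S" by (intro gen_least) (auto simp: S_def)
  then show "e ` gen \<sigma> A X \<subseteq> gen \<sigma> B (e ` X)" unfolding S_def by auto
next
  let ?G = "gen \<sigma> A X"
  have "closed_set \<sigma> B (e ` ?G)"
    unfolding closed_set_def
  proof (intro allI ballI)
    fix f ys assume ys: "ys \<in> tuples (e ` ?G) (far \<sigma> f)"
    define xs where "xs = map (inv_into ?G e) ys"
    have xs: "set xs \<subseteq> ?G" "ys = map e xs" "length xs = far \<sigma> f"
      using ys by (auto simp: xs_def inv_into_into f_inv_into_f intro!: map_idI[symmetric])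
    then have "fn B f ys = e (fn A f xs)"
      using h gen_subset_univ[OF A X] unfolding hom_def by auto
    then show "fn B f ys \<in> e ` ?G" using gen_fn[OF A X xs(3,1)] by auto
  qed
  moreover have "e ` ?G \<subseteq> univ B" using gen_subset_univ[OF A X] h unfolding hom_def by auto
  ultimately show "gen \<sigma> B (e ` X) \<subseteq> e ` ?G"
    using gen_least subset_gen[OF A X] by (metis image_mono)
qed

lemma hom_tuples: "hom \<sigma> A B h \<Longrightarrow> xs \<in> tuples (univ A) n \<Longrightarrow> map h xs \<in> tuples (univ B) n"
  by (auto simp: hom_def)

lemma hom_comp:
  assumes f: "hom \<sigma> A B f" and g: "hom \<sigma> B C g"
  shows "hom \<sigma> A C (g \<circ> f)"
  unfolding hom_def
proof (intro conjI allI ballI impI)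
  fix x assume "x \<in> univ A" then show "(g \<circ> f) x \<in> univ C" using f g by (simp add: hom_def)
next
  fix R xs assume "xs \<in> tuples (univ A) (rar \<sigma> R)" "rel A R xs"
  then show "rel C R (map (g \<circ> f) xs)"
    using f g hom_tuples[OF f] unfolding hom_def by (metis map_map)
next
  fix F xs assume "xs \<in> tuples (univ A) (far \<sigma> F)"
  then show "(g \<circ> f) (fn A F xs) = fn C F (map (g \<circ> f) xs)"
    using f g hom_tuples[OF f] unfolding hom_def by (metis map_map o_apply)
qed

lemma emb_comp:
  assumes f: "emb \<sigma> A B f" and g: "emb \<sigma> B C g"
  shows "emb \<sigma> A C (g \<circ> f)"
proof -
  have hf: "hom \<sigma> A B f" and hg: "hom \<sigma> B C g" using f g unfolding emb_def by auto
  have "inj_on (g \<circ> f) (univ A)"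
    using f g hf unfolding emb_def hom_def by (metis comp_inj_on inj_on_subset image_subset_iff)
  moreover have "\<forall>R. \<forall>xs\<in>tuples (univ A) (rar \<sigma> R). rel C R (map (g \<circ> f) xs) \<longrightarrow> rel A R xs"
    using f g hom_tuples[OF hf] unfolding emb_def by (metis map_map)
  ultimately show ?thesis using hom_comp[OF hf hg] unfolding emb_def by auto
qed

lemma iso_comp: "iso \<sigma> A B f \<Longrightarrow> iso \<sigma> B C g \<Longrightarrow> iso \<sigma> A C (g \<circ> f)"
  using emb_comp unfolding iso_def by (metis image_comp)

lemma iso_id: "iso \<sigma> A A id"
  unfolding iso_def emb_def hom_def by auto

lemma iso_inv_into:
  assumes A: "is_struc \<sigma> A" and f: "iso \<sigma> A B f"
  shows "iso \<sigma> B A (inv_into (univ A) f)"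
proof -
  let ?g = "inv_into (univ A) f"
  have inj: "inj_on f (univ A)" and im: "f ` univ A = univ B" and hf: "hom \<sigma> A B f"
    and refl: "\<forall>R. \<forall>xs\<in>tuples (univ A) (rar \<sigma> R). rel B R (map f xs) \<longrightarrow> rel A R xs"
    using f unfolding iso_def emb_def by auto
  have gB: "?g y \<in> univ A" if "y \<in> univ B" for y using im that by (metis inv_into_into)
  have gf: "?g (f x) = x" if "x \<in> univ A" for x using inj that by (metis inv_into_f_f)
  have fg: "map f (map ?g ys) = ys" if "set ys \<subseteq> univ B" for ys
    using im that by (simp add: map_idI subset_iff f_inv_into_f)
  have gtuples: "map ?g ys \<in> tuples (univ A) n" if "ys \<in> tuples (univ B) n" for ys n
    using gB that by auto
  have "hom \<sigma> B A ?g"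
    unfolding hom_def
  proof (intro conjI allI ballI impI)
    fix y assume "y \<in> univ B" then show "?g y \<in> univ A" by (rule gB)
  next
    fix R ys assume ys: "ys \<in> tuples (univ B) (rar \<sigma> R)" and "rel B R ys"
    then have "rel B R (map f (map ?g ys))" using fg by simp
    then show "rel A R (map ?g ys)" using refl gtuples[OF ys] by blast
  next
    fix F ys assume ys: "ys \<in> tuples (univ B) (far \<sigma> F)"
    have "f (fn A F (map ?g ys)) = fn B F ys"
      using hf gtuples[OF ys] fg ys unfolding hom_def by auto
    moreover have "fn A F (map ?g ys) \<in> univ A"
      using is_struc_fn[OF A] gtuples[OF ys] by simp
    ultimately show "?g (fn B F ys) = fn A F (map ?g ys)" using gf by metis
  qed
  moreover have "\<forall>R. \<forall>ys\<in>tuples (univ B) (rar \<sigma> R). rel A R (map ?g ys) \<longrightarrow> rel B R ys"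
  proof (intro allI ballI impI)
    fix R ys assume ys: "ys \<in> tuples (univ B) (rar \<sigma> R)" and "rel A R (map ?g ys)"
    then have "rel B R (map f (map ?g ys))" using hf gtuples[OF ys] unfolding hom_def by blast
    then show "rel B R ys" using fg ys by simp
  qed
  moreover have "inj_on ?g (univ B)" "?g ` univ B = univ A"
    using im inj bij_betw_inv_into[of f "univ A" "univ B"]
    by (auto simp: inj_on_inv_into bij_betw_def)
  ultimately show ?thesis unfolding iso_def emb_def by auto
qed

lemma emb_restr:
  assumes "emb \<sigma> A B e" "S \<subseteq> univ A"
  shows "emb \<sigma> (restr A S) B e"
  using assms unfolding emb_def hom_def by (auto intro: inj_on_subset)

lemma iso_restr_image:
  assumes "emb \<sigma> A B e" "S \<subseteq> univ A"
  shows "iso \<sigma> (restr A S) (restr B (e ` S)) e"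
  using assms unfolding iso_def emb_def hom_def by (auto intro: inj_on_subset)

lemma emb_gen_sub_image:
  assumes A: "is_struc \<sigma> A" and M: "is_struc \<sigma> M" and X: "X \<subseteq> univ A"
    and \<phi>: "emb \<sigma> (gen_sub \<sigma> A X) M \<phi>"
  shows "\<phi> ` gen \<sigma> A X = gen \<sigma> M (\<phi> ` X)"
proof -
  have "is_struc \<sigma> (restr A (gen \<sigma> A X))" "X \<subseteq> univ (restr A (gen \<sigma> A X))"
    using is_struc_restr[OF closed_set_gen[OF A X]] subset_gen[OF A X] by auto
  from gen_image[OF this(1) M _ this(2)] show ?thesis
    using \<phi> gen_restr_gen[OF A X] by (simp add: gen_sub_def emb_def)
qed

lemma iso_restrD:
  assumes "iso \<sigma> (restr V D) (restr V R) p"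
  shows "p ` D = R" "inj_on p D"
    and "\<And>Q xs. length xs = rar \<sigma> Q \<Longrightarrow> set xs \<subseteq> D \<Longrightarrow> rel V Q (map p xs) \<longleftrightarrow> rel V Q xs"
    and "\<And>f xs. length xs = far \<sigma> f \<Longrightarrow> set xs \<subseteq> D \<Longrightarrow> p (fn V f xs) = fn V f (map p xs)"
proof -
  have "emb \<sigma> (restr V D) (restr V R) p" and im: "p ` D = R" using assms by (auto simp: iso_def)
  then have h: "hom \<sigma> (restr V D) (restr V R) p" and inj: "inj_on p D"
    and refl: "\<forall>Q. \<forall>xs\<in>tuples D (rar \<sigma> Q). rel V Q (map p xs) \<longrightarrow> rel V Q xs"
    by (auto simp: emb_def)
  show "p ` D = R" "inj_on p D" by (fact im, fact inj)
  show "rel V Q (map p xs) \<longleftrightarrow> rel V Q xs" if "length xs = rar \<sigma> Q" "set xs \<subseteq> D" for Q xs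
    using h refl that unfolding hom_def by auto
  show "p (fn V f xs) = fn V f (map p xs)" if "length xs = far \<sigma> f" "set xs \<subseteq> D" for f xs
    using h that unfolding hom_def by auto
qed

lemma id_Aut: "id \<in> Aut \<sigma> A"
  by (simp add: Aut_def iso_id)

lemma Aut_comp: "\<alpha> \<in> Aut \<sigma> A \<Longrightarrow> \<beta> \<in> Aut \<sigma> A \<Longrightarrow> \<beta> \<circ> \<alpha> \<in> Aut \<sigma> A"
  unfolding Aut_def using iso_comp by blast

lemma Aut_inv_into: "is_struc \<sigma> A \<Longrightarrow> \<alpha> \<in> Aut \<sigma> A \<Longrightarrow> inv_into (univ A) \<alpha> \<in> Aut \<sigma> A"
  unfolding Aut_def using iso_inv_into by auto

lemma Aut_emb: "\<alpha> \<in> Aut \<sigma> A \<Longrightarrow> emb \<sigma> A A \<alpha>"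
  by (simp add: Aut_def iso_def)

lemma Aut_hom: "\<alpha> \<in> Aut \<sigma> A \<Longrightarrow> hom \<sigma> A A \<alpha>"
  by (simp add: Aut_def iso_def emb_def)

lemma Aut_bij_betw: "\<alpha> \<in> Aut \<sigma> A \<Longrightarrow> bij_betw \<alpha> (univ A) (univ A)"
  by (simp add: Aut_def iso_def emb_def bij_betw_def)

lemma card_gen_Aut_map:
  assumes A: "is_struc \<sigma> A" and g: "g \<in> Aut \<sigma> A" and xs: "set xs \<subseteq> univ A"
  shows "card (gen \<sigma> A (set (map g xs))) = card (gen \<sigma> A (set xs))"
proof -
  have "gen \<sigma> A (set (map g xs)) = g ` gen \<sigma> A (set xs)"
    using gen_image[OF A A Aut_hom[OF g] xs] by simp
  moreover have "inj_on g (gen \<sigma> A (set xs))"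
    using bij_betw_imp_inj_on[OF Aut_bij_betw[OF g]] gen_subset_univ[OF A xs] by (rule inj_on_subset)
  ultimately show ?thesis by (simp add: card_image)
qed

lemma iso_through_Aut:
  assumes B: "is_struc \<sigma> B" and \<phi>A: "emb \<sigma> A M \<phi>A" and \<phi>B: "emb \<sigma> B M \<phi>B" and g: "g \<in> Aut \<sigma> M"
    and LA: "set LA = univ A" and LB: "set LB = univ B"
    and eq: "map (g \<circ> \<phi>A) LA = map \<phi>B LB"
  shows "iso \<sigma> A B (inv_into (univ B) \<phi>B \<circ> (g \<circ> \<phi>A))"
    and "map (inv_into (univ B) \<phi>B \<circ> (g \<circ> \<phi>A)) LA = LB"
proof -
  have img: "(g \<circ> \<phi>A) ` univ A = \<phi>B ` univ B"
    using arg_cong[OF eq, of set] LA LB by simp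
  have "iso \<sigma> A (restr M (\<phi>B ` univ B)) (g \<circ> \<phi>A)"
    using iso_restr_image[OF emb_comp[OF \<phi>A Aut_emb[OF g]], of "univ A"] img by simp
  moreover have "iso \<sigma> (restr M (\<phi>B ` univ B)) B (inv_into (univ B) \<phi>B)"
    using iso_inv_into[OF B] iso_restr_image[OF \<phi>B, of "univ B"] by simp
  ultimately show "iso \<sigma> A B (inv_into (univ B) \<phi>B \<circ> (g \<circ> \<phi>A))"
    by (rule iso_comp)
  have "inj_on \<phi>B (univ B)" using \<phi>B by (simp add: emb_def)
  then have "map (inv_into (univ B) \<phi>B \<circ> \<phi>B) LB = LB"
    using LB by (intro map_idI) (simp add: inv_into_f_f)
  then show "map (inv_into (univ B) \<phi>B \<circ> (g \<circ> \<phi>A)) LA = LB"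
    using eq by (metis map_map)
qed

definition orbit :: "(nat \<Rightarrow> nat) set \<Rightarrow> nat list \<Rightarrow> nat list set" where
  "orbit G xs = {map g xs | g. g \<in> G}"

lemma oligomorphic_iff_orbit: "oligomorphic \<Omega> G \<longleftrightarrow> (\<forall>n\<ge>1. finite (orbit G ` tuples \<Omega> n))"
  unfolding oligomorphic_def orbit_def by simp

lemma in_orbit_Aut: "xs \<in> orbit (Aut \<sigma> A) xs"
  unfolding orbit_def by (intro CollectI exI[of _ id]) (simp add: id_Aut)

lemma orbit_Aut_map:
  assumes A: "is_struc \<sigma> A" and \<alpha>: "\<alpha> \<in> Aut \<sigma> A" and xs: "set xs \<subseteq> univ A"
  shows "orbit (Aut \<sigma> A) (map \<alpha> xs) = orbit (Aut \<sigma> A) xs"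
proof (intro equalityI subsetI)
  fix zs assume "zs \<in> orbit (Aut \<sigma> A) (map \<alpha> xs)"
  then obtain g where "g \<in> Aut \<sigma> A" "zs = map (g \<circ> \<alpha>) xs" unfolding orbit_def by auto
  then show "zs \<in> orbit (Aut \<sigma> A) xs" unfolding orbit_def using Aut_comp[OF \<alpha>] by blast
next
  fix zs assume "zs \<in> orbit (Aut \<sigma> A) xs"
  then obtain g where g: "g \<in> Aut \<sigma> A" "zs = map g xs" unfolding orbit_def by auto
  let ?\<alpha>' = "inv_into (univ A) \<alpha>"
  have "map (g \<circ> ?\<alpha>') (map \<alpha> xs) = zs"
    using g xs bij_betw_imp_inj_on[OF Aut_bij_betw[OF \<alpha>]] by (auto simp: inv_into_f_f subset_iff)
  then show "zs \<in> orbit (Aut \<sigma> A) (map \<alpha> xs)"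
    unfolding orbit_def using Aut_comp[OF Aut_inv_into[OF A \<alpha>] g(1)] by blast
qed

lemma finite_image_classified:
  assumes "finite S" and "\<And>a. a \<in> A \<Longrightarrow> \<exists>t\<in>S. P a t"
    and "\<And>a b t. a \<in> A \<Longrightarrow> b \<in> A \<Longrightarrow> t \<in> S \<Longrightarrow> P a t \<Longrightarrow> P b t \<Longrightarrow> f a = f b"
  shows "finite (f ` A)"
proof -
  have "f ` A \<subseteq> (\<lambda>t. f (SOME a. a \<in> A \<and> P a t)) ` S"
  proof
    fix y assume "y \<in> f ` A"
    then obtain a t where "a \<in> A" "y = f a" "t \<in> S" "P a t" using assms(2) by blast
    moreover have "(SOME a. a \<in> A \<and> P a t) \<in> A \<and> P (SOME a. a \<in> A \<and> P a t) t"
      using calculation by (intro someI) auto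
    ultimately show "y \<in> (\<lambda>t. f (SOME a. a \<in> A \<and> P a t)) ` S" using assms(3) by blast
  qed
  then show ?thesis using assms(1) finite_subset by blast
qed

lemma oligomorphic_bounded_invariant:
  fixes f :: "nat list \<Rightarrow> nat"
  assumes "oligomorphic \<Omega> G" "id \<in> G" "n \<ge> 1"
    and "\<And>g xs. g \<in> G \<Longrightarrow> xs \<in> tuples \<Omega> n \<Longrightarrow> f (map g xs) = f xs"
  shows "\<exists>K. \<forall>xs\<in>tuples \<Omega> n. f xs \<le> K"
proof -
  have "finite (f ` tuples \<Omega> n)"
  proof (rule finite_image_classified[where P = "\<lambda>xs zs. xs \<in> zs"])
    show "finite (orbit G ` tuples \<Omega> n)" using assms(1,3) oligomorphic_iff_orbit by blast
    show "\<exists>zs\<in>orbit G ` tuples \<Omega> n. xs \<in> zs" if "xs \<in> tuples \<Omega> n" for xs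
      using that assms(2) unfolding orbit_def by force
    show "f xs = f ys"
      if "xs \<in> tuples \<Omega> n" "ys \<in> tuples \<Omega> n" "zs \<in> orbit G ` tuples \<Omega> n" "xs \<in> zs" "ys \<in> zs"
      for xs ys zs
      using that assms(4) unfolding orbit_def by auto
  qed
  then show ?thesis by (meson finite_nat_set_iff_bounded_le imageI)
qed

subsection \<open>Unions of chains of partial isomorphisms\<close>

lemma finite_subset_chain:
  assumes D: "\<And>k. D k \<subseteq> D (Suc k)" and xs: "set xs \<subseteq> (\<Union>k. D k)"
  shows "\<exists>k. set xs \<subseteq> D k"
  using xs
proof (induction xs)
  case (Cons x xs)
  then obtain k j where "set xs \<subseteq> D k" "x \<in> D j" by auto
  then show ?case
    using lift_Suc_mono_le[of D, OF D, of k "max k j"] lift_Suc_mono_le[of D, OF D, of j "max k j"] by auto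
qed simp

lemma chain_limit:
  assumes D: "\<And>k. D k \<subseteq> D (Suc k)" and agree: "\<And>k x. x \<in> D k \<Longrightarrow> p (Suc k) x = p k x"
  shows "\<exists>\<alpha>. \<forall>k. \<forall>x\<in>D k. \<alpha> x = p k x"
proof (intro exI allI ballI)
  have agree_le: "p j x = p k x" if "k \<le> j" "x \<in> D k" for k j x
    using that(1) by (induction j rule: dec_induct) (simp, metis lift_Suc_mono_le[of D, OF D] agree subsetD that(2))
  fix k x assume "x \<in> D k"
  then have "(LEAST k. x \<in> D k) \<le> k" "x \<in> D (LEAST k. x \<in> D k)" by (auto intro: Least_le LeastI)
  then show "p (LEAST k. x \<in> D k) x = p k x" by (simp add: agree_le)
qed

lemma Aut_of_iso_chain:
  assumes V: "is_struc \<sigma> V"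
    and p: "\<And>k. iso \<sigma> (restr V (D k)) (restr V (R k)) (p k)"
    and D: "\<And>k. D k \<subseteq> D (Suc k)"
    and agree: "\<And>k x. x \<in> D k \<Longrightarrow> p (Suc k) x = p k x"
    and D_exhaust: "(\<Union>k. D k) = univ V" and R_exhaust: "(\<Union>k. R k) = univ V"
  shows "\<exists>\<alpha>\<in>Aut \<sigma> V. \<forall>k. \<forall>x\<in>D k. \<alpha> x = p k x"
proof -
  obtain \<alpha> where \<alpha>: "\<And>k x. x \<in> D k \<Longrightarrow> \<alpha> x = p k x" using chain_limit[of D p, OF D agree] by blast
  have cover: "\<exists>k. set xs \<subseteq> D k" if "set xs \<subseteq> univ V" for xs
    using finite_subset_chain[of D, OF D] that D_exhaust by simp
  have map_\<alpha>: "map \<alpha> xs = map (p k) xs" if "set xs \<subseteq> D k" for xs k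
    using that \<alpha> by auto
  note pD = iso_restrD[OF p]
  have "hom \<sigma> V V \<alpha>"
    unfolding hom_def
  proof (intro conjI allI ballI impI)
    fix x assume "x \<in> univ V"
    then obtain k where "x \<in> D k" using cover[of "[x]"] by auto
    then show "\<alpha> x \<in> univ V" using \<alpha> pD(1) R_exhaust by blast
  next
    fix Q xs assume xs: "xs \<in> tuples (univ V) (rar \<sigma> Q)" and "rel V Q xs"
    moreover obtain k where "set xs \<subseteq> D k" using cover[of xs] xs by auto
    ultimately show "rel V Q (map \<alpha> xs)" using pD(3)[of xs Q k] by (simp add: map_\<alpha>[of xs k])
  next
    fix f xs assume xs: "xs \<in> tuples (univ V) (far \<sigma> f)"
    then have "set (fn V f xs # xs) \<subseteq> univ V" using is_struc_fn[OF V] by simp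
    then obtain k where k: "fn V f xs \<in> D k" "set xs \<subseteq> D k" using cover by fastforce
    then show "\<alpha> (fn V f xs) = fn V f (map \<alpha> xs)"
      using xs pD(4)[of xs f k] by (simp add: \<alpha>[OF k(1)] map_\<alpha>[OF k(2)])
  qed
  moreover have "rel V Q xs" if xs: "xs \<in> tuples (univ V) (rar \<sigma> Q)" and "rel V Q (map \<alpha> xs)" for Q xs
  proof -
    obtain k where "set xs \<subseteq> D k" using cover[of xs] xs by auto
    then show ?thesis using that pD(3)[of xs Q k] by (simp add: map_\<alpha>[of xs k])
  qed
  moreover have "inj_on \<alpha> (univ V)"
  proof (rule inj_onI)
    fix x y assume "x \<in> univ V" "y \<in> univ V" "\<alpha> x = \<alpha> y"
    moreover obtain k where "x \<in> D k" "y \<in> D k" using cover[of "[x, y]"] calculation by auto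
    ultimately show "x = y" using \<alpha> pD(2)[of k] by (auto dest: inj_onD)
  qed
  moreover have "univ V \<subseteq> \<alpha> ` univ V"
  proof
    fix y assume "y \<in> univ V"
    then obtain k x where x: "x \<in> D k" "y = p k x" using R_exhaust pD(1) by blast
    then have "x \<in> univ V" using D_exhaust by blast
    then show "y \<in> \<alpha> ` univ V" using \<alpha>[OF x(1)] x(2) by (metis image_eqI)
  qed
  moreover have "\<alpha> ` univ V \<subseteq> univ V" using calculation(1) by (auto simp: hom_def)
  ultimately show ?thesis using \<alpha> unfolding Aut_def iso_def emb_def by blast
qed

subsection \<open>Back and forth over automorphisms of the target\<close>

locale universal_homogeneous_hom =
  fixes \<sigma> :: "('r, 'f) signature" and C :: "('r, 'f) struc set" and V T :: "('r, 'f) struc"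
    and u :: "nat \<Rightarrow> nat"
  assumes universal: "universal_hom \<sigma> C V T u" and homogeneous: "homogeneous_hom \<sigma> V T u"
begin

lemma V_cbar: "cbar \<sigma> C V" and V_struc: "is_struc \<sigma> V" and T_struc: "is_struc \<sigma> T"
  and u_hom: "hom \<sigma> V T u"
  using universal by (auto simp: universal_hom_def cbar_def)

lemma u_into: "x \<in> univ V \<Longrightarrow> u x \<in> univ T"
  using u_hom by (simp add: hom_def)

definition partial_lift :: "(nat \<Rightarrow> nat) \<Rightarrow> nat set \<Rightarrow> nat set \<Rightarrow> (nat \<Rightarrow> nat) \<Rightarrow> bool" where
  "partial_lift \<beta> X Y p \<longleftrightarrow> finite X \<and> X \<subseteq> univ V \<and> finite Y \<and> Y \<subseteq> univ V \<and>
     iso \<sigma> (gen_sub \<sigma> V X) (gen_sub \<sigma> V Y) p \<and> (\<forall>x\<in>gen \<sigma> V X. u (p x) = \<beta> (u x))"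

lemma partial_liftD:
  assumes "partial_lift \<beta> X Y p"
  shows "finite X" "X \<subseteq> univ V" "finite Y" "Y \<subseteq> univ V"
    and "iso \<sigma> (restr V (gen \<sigma> V X)) (restr V (gen \<sigma> V Y)) p"
    and "\<And>x. x \<in> gen \<sigma> V X \<Longrightarrow> u (p x) = \<beta> (u x)"
    and "p ` gen \<sigma> V X = gen \<sigma> V Y" "inj_on p (gen \<sigma> V X)"
    and "gen \<sigma> V X \<subseteq> univ V" "gen \<sigma> V Y \<subseteq> univ V"
  using assms gen_subset_univ[OF V_struc] unfolding partial_lift_def gen_sub_def iso_def emb_def
  by auto

lemma universal_self_emb:
  assumes "\<beta> \<in> Aut \<sigma> T"
  shows "\<exists>\<iota>. emb \<sigma> V V \<iota> \<and> (\<forall>x\<in>univ V. u (\<iota> x) = \<beta> (u x))"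
proof -
  have "hom \<sigma> V T (\<beta> \<circ> u)" using hom_comp[OF u_hom Aut_hom[OF assms]] .
  then have "\<exists>\<iota>. emb \<sigma> V V \<iota> \<and> (\<forall>x\<in>univ V. (\<beta> \<circ> u) x = u (\<iota> x))"
    using universal V_cbar unfolding universal_hom_def by blast
  then show ?thesis by auto
qed

text \<open>Universality realises \<open>\<beta>\<close> by a self-embedding \<open>\<iota>\<close> of \<open>V\<close>; homogeneity, applied to
  \<open>\<iota> \<circ> p\<inverse>\<close>, yields an automorphism \<open>\<gamma>\<close> over \<open>T\<close> with \<open>\<gamma> \<circ> p = \<iota>\<close>, so \<open>\<gamma>\<inverse> \<circ> \<iota>\<close> extends \<open>p\<close>.\<close>

lemma partial_lift_realign:
  assumes \<beta>: "\<beta> \<in> Aut \<sigma> T" and p: "partial_lift \<beta> X Y p"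
  obtains \<iota> \<gamma> where "emb \<sigma> V V \<iota>" "\<And>x. x \<in> univ V \<Longrightarrow> u (\<iota> x) = \<beta> (u x)"
    and "\<gamma> \<in> Aut \<sigma> V" "\<And>x. x \<in> univ V \<Longrightarrow> u (\<gamma> x) = u x"
    and "\<And>x. x \<in> gen \<sigma> V X \<Longrightarrow> \<gamma> (p x) = \<iota> x"
proof -
  note pD = partial_liftD[OF p]
  obtain \<iota> where \<iota>: "emb \<sigma> V V \<iota>" "\<And>x. x \<in> univ V \<Longrightarrow> u (\<iota> x) = \<beta> (u x)"
    using universal_self_emb[OF \<beta>] by blast
  let ?GX = "gen \<sigma> V X" and ?GY = "gen \<sigma> V Y"
  let ?p' = "inv_into ?GX p"
  have p'_iso: "iso \<sigma> (restr V ?GY) (restr V ?GX) ?p'"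
    using iso_inv_into[OF is_struc_restr[OF closed_set_gen[OF V_struc pD(2)]] pD(5)] by simp
  have p': "?p' y \<in> ?GX" "p (?p' y) = y" if "y \<in> ?GY" for y
    using pD(7) that by (metis inv_into_into, metis f_inv_into_f)
  have "emb \<sigma> (restr V ?GY) V (\<iota> \<circ> ?p')"
    using emb_comp[OF _ emb_restr[OF \<iota>(1) pD(9)]] p'_iso unfolding iso_def by blast
  moreover have "\<forall>y\<in>?GY. u ((\<iota> \<circ> ?p') y) = u y"
  proof
    fix y assume y: "y \<in> ?GY"
    then have "?p' y \<in> univ V" using p'(1) pD(9) by blast
    then have "u (\<iota> (?p' y)) = \<beta> (u (?p' y))" by (rule \<iota>(2))
    also have "\<dots> = u y" using pD(6)[OF p'(1)[OF y]] p'(2)[OF y] by simp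
    finally show "u ((\<iota> \<circ> ?p') y) = u y" by simp
  qed
  ultimately have "\<exists>\<gamma>\<in>Aut \<sigma> V. (\<forall>x\<in>univ V. u (\<gamma> x) = u x) \<and> (\<forall>y\<in>?GY. \<gamma> y = (\<iota> \<circ> ?p') y)"
    using homogeneous pD(3,4) unfolding homogeneous_hom_def gen_sub_def by blast
  then obtain \<gamma> where \<gamma>: "\<gamma> \<in> Aut \<sigma> V" "\<And>x. x \<in> univ V \<Longrightarrow> u (\<gamma> x) = u x"
      "\<And>y. y \<in> ?GY \<Longrightarrow> \<gamma> y = \<iota> (?p' y)"
    by auto
  have "\<gamma> (p x) = \<iota> x" if "x \<in> ?GX" for x
    using that pD(7,8) \<gamma>(3)[of "p x"] by (auto simp: inv_into_f_f)
  with \<iota> \<gamma>(1,2) show thesis by (rule that)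
qed

lemma partial_lift_extends_to_emb:
  assumes \<beta>: "\<beta> \<in> Aut \<sigma> T" and p: "partial_lift \<beta> X Y p"
  shows "\<exists>e. emb \<sigma> V V e \<and> (\<forall>x\<in>gen \<sigma> V X. e x = p x) \<and> (\<forall>x\<in>univ V. u (e x) = \<beta> (u x))"
proof -
  obtain \<iota> \<gamma> where \<iota>: "emb \<sigma> V V \<iota>" "\<And>x. x \<in> univ V \<Longrightarrow> u (\<iota> x) = \<beta> (u x)"
    and \<gamma>: "\<gamma> \<in> Aut \<sigma> V" "\<And>x. x \<in> univ V \<Longrightarrow> u (\<gamma> x) = u x"
    and \<gamma>_p: "\<And>x. x \<in> gen \<sigma> V X \<Longrightarrow> \<gamma> (p x) = \<iota> x"
    using partial_lift_realign[OF \<beta> p] by blast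
  let ?\<gamma>' = "inv_into (univ V) \<gamma>"
  have \<gamma>_bij: "bij_betw \<gamma> (univ V) (univ V)" using Aut_bij_betw[OF \<gamma>(1)] .
  have "emb \<sigma> V V (?\<gamma>' \<circ> \<iota>)"
    using emb_comp[OF \<iota>(1) Aut_emb[OF Aut_inv_into[OF V_struc \<gamma>(1)]]] .
  moreover have "?\<gamma>' (\<iota> x) = p x" if "x \<in> gen \<sigma> V X" for x
  proof -
    have "p x \<in> univ V" using that partial_liftD(7,10)[OF p] by blast
    then show ?thesis using bij_betw_inv_into_left[OF \<gamma>_bij] \<gamma>_p[OF that] by metis
  qed
  moreover have "u (?\<gamma>' (\<iota> x)) = \<beta> (u x)" if "x \<in> univ V" for x
  proof -
    have "\<iota> x \<in> univ V" using \<iota>(1) that by (auto simp: emb_def hom_def)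
    then have "?\<gamma>' (\<iota> x) \<in> univ V" "\<gamma> (?\<gamma>' (\<iota> x)) = \<iota> x"
      using \<gamma>_bij by (auto simp: bij_betw_def inv_into_into f_inv_into_f)
    then show ?thesis using \<gamma>(2) \<iota>(2)[OF that] by metis
  qed
  ultimately show ?thesis by auto
qed

lemma partial_lift_forth:
  assumes \<beta>: "\<beta> \<in> Aut \<sigma> T" and p: "partial_lift \<beta> X Y p" and v: "v \<in> univ V"
  shows "\<exists>p'. partial_lift \<beta> (insert v X) (insert (p' v) Y) p' \<and> (\<forall>x\<in>gen \<sigma> V X. p' x = p x)"
proof -
  note pD = partial_liftD[OF p]
  obtain e where e: "emb \<sigma> V V e" "\<forall>x\<in>gen \<sigma> V X. e x = p x" "\<forall>x\<in>univ V. u (e x) = \<beta> (u x)"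
    using partial_lift_extends_to_emb[OF \<beta> p] by blast
  have he: "hom \<sigma> V V e" using e(1) unfolding emb_def by auto
  have ev: "e v \<in> univ V" using he v unfolding hom_def by auto
  have vX: "insert v X \<subseteq> univ V" using v pD(2) by auto
  have eX: "e ` X \<subseteq> univ V" using he pD(2) unfolding hom_def by auto
  have "gen \<sigma> V (e ` X) = e ` gen \<sigma> V X" using gen_image[OF V_struc V_struc he pD(2)] by simp
  also have "\<dots> = gen \<sigma> V Y" using e(2) pD(7) by (auto simp: image_def)
  finally have eX_gen: "gen \<sigma> V (e ` X) = gen \<sigma> V Y" .
  have "e ` gen \<sigma> V (insert v X) = gen \<sigma> V (e ` X \<union> {e v})"
    using gen_image[OF V_struc V_struc he vX] by (simp add: Un_commute)
  also have "\<dots> = gen \<sigma> V (gen \<sigma> V Y \<union> {e v})"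
    using gen_gen_Un[OF V_struc eX, of "{e v}"] ev eX_gen by simp
  also have "\<dots> = gen \<sigma> V (insert (e v) Y)" using gen_gen_Un[OF V_struc pD(4), of "{e v}"] ev by simp
  finally have "iso \<sigma> (gen_sub \<sigma> V (insert v X)) (gen_sub \<sigma> V (insert (e v) Y)) e"
    unfolding gen_sub_def using iso_restr_image[OF e(1) gen_subset_univ[OF V_struc vX]] by simp
  moreover have "\<forall>x\<in>gen \<sigma> V (insert v X). u (e x) = \<beta> (u x)"
    using e(3) gen_subset_univ[OF V_struc vX] by auto
  ultimately have "partial_lift \<beta> (insert v X) (insert (e v) Y) e"
    unfolding partial_lift_def using pD(1-4) v ev by auto
  then show ?thesis using e(2) by blast
qed

lemma partial_lift_inv_into:
  assumes p: "partial_lift \<beta> X Y p" and \<beta>': "\<forall>t\<in>univ T. \<beta>' (\<beta> t) = t"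
  shows "partial_lift \<beta>' Y X (inv_into (gen \<sigma> V X) p)"
proof -
  note pD = partial_liftD[OF p]
  have "iso \<sigma> (gen_sub \<sigma> V Y) (gen_sub \<sigma> V X) (inv_into (gen \<sigma> V X) p)"
    using iso_inv_into[OF is_struc_restr[OF closed_set_gen[OF V_struc pD(2)]] pD(5)]
    unfolding gen_sub_def by simp
  moreover have "u (inv_into (gen \<sigma> V X) p y) = \<beta>' (u y)" if "y \<in> gen \<sigma> V Y" for y
  proof -
    have "y \<in> p ` gen \<sigma> V X" using that pD(7) by simp
    then obtain x where x: "x \<in> gen \<sigma> V X" "y = p x" by blast
    then have "inv_into (gen \<sigma> V X) p y = x" using pD(8) by (simp add: inv_into_f_f)
    moreover have "u x \<in> univ T" using u_into x pD(9) by auto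
    ultimately show ?thesis using pD(6)[OF x(1)] x(2) \<beta>' by simp
  qed
  ultimately show ?thesis using pD(1-4) unfolding partial_lift_def by auto
qed

lemma partial_lift_back:
  assumes \<beta>: "\<beta> \<in> Aut \<sigma> T" and p: "partial_lift \<beta> X Y p" and w: "w \<in> univ V"
  shows "\<exists>X' p'. partial_lift \<beta> X' (insert w Y) p' \<and> X \<subseteq> X' \<and> (\<forall>x\<in>gen \<sigma> V X. p' x = p x)"
proof -
  note pD = partial_liftD[OF p]
  let ?\<beta>' = "inv_into (univ T) \<beta>"
  have \<beta>_bij: "bij_betw \<beta> (univ T) (univ T)" using Aut_bij_betw[OF \<beta>] .
  have "partial_lift ?\<beta>' Y X (inv_into (gen \<sigma> V X) p)"
    by (intro partial_lift_inv_into[OF p] ballI bij_betw_inv_into_left[OF \<beta>_bij])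
  then obtain q where q: "partial_lift ?\<beta>' (insert w Y) (insert (q w) X) q"
      "\<forall>y\<in>gen \<sigma> V Y. q y = inv_into (gen \<sigma> V X) p y"
    using partial_lift_forth[OF Aut_inv_into[OF T_struc \<beta>]] w by blast
  let ?G = "gen \<sigma> V (insert w Y)"
  have "partial_lift \<beta> (insert (q w) X) (insert w Y) (inv_into ?G q)"
    by (intro partial_lift_inv_into[OF q(1)] ballI bij_betw_inv_into_right[OF \<beta>_bij])
  moreover have "inv_into ?G q x = p x" if x: "x \<in> gen \<sigma> V X" for x
  proof -
    have px: "p x \<in> gen \<sigma> V Y" using x pD(7) by auto
    then have "p x \<in> ?G" using gen_mono[OF V_struc, of Y "insert w Y"] w pD(4) by auto
    moreover have "q (p x) = x" using q(2) px x pD(8) by (simp add: inv_into_f_f)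
    ultimately show ?thesis using inv_into_f_f[OF partial_liftD(8)[OF q(1)], of "p x"] by simp
  qed
  ultimately show ?thesis by blast
qed

lemma partial_lift_back_and_forth:
  assumes \<beta>: "\<beta> \<in> Aut \<sigma> T" and p: "partial_lift \<beta> X Y p" and v: "v \<in> univ V"
  shows "\<exists>X' Y' p'. partial_lift \<beta> X' Y' p' \<and> insert v X \<subseteq> X' \<and> insert v Y \<subseteq> Y' \<and>
    (\<forall>x\<in>gen \<sigma> V X. p' x = p x)"
proof -
  obtain p1 where p1: "partial_lift \<beta> (insert v X) (insert (p1 v) Y) p1" "\<forall>x\<in>gen \<sigma> V X. p1 x = p x"
    using partial_lift_forth[OF \<beta> p v] by blast
  obtain X' p' where p': "partial_lift \<beta> X' (insert v (insert (p1 v) Y)) p'" "insert v X \<subseteq> X'"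
      "\<forall>x\<in>gen \<sigma> V (insert v X). p' x = p1 x"
    using partial_lift_back[OF \<beta> p1(1) v] by blast
  have "gen \<sigma> V X \<subseteq> gen \<sigma> V (insert v X)"
    using gen_mono[OF V_struc _ partial_liftD(2)[OF p1(1)]] by auto
  then have "\<forall>x\<in>gen \<sigma> V X. p' x = p x" using p1(2) p'(3) by auto
  moreover have "insert v Y \<subseteq> insert v (insert (p1 v) Y)" by auto
  ultimately show ?thesis using p'(1,2) by blast
qed

text \<open>Since \<open>univ V \<subseteq> \<nat>\<close>, stage \<open>n\<close> of the back-and-forth construction takes care of
  the element \<open>n\<close>.\<close>

lemma partial_lift_chain:
  assumes \<beta>: "\<beta> \<in> Aut \<sigma> T" and p: "partial_lift \<beta> X Y p"
  obtains XX YY PP where "\<And>n. partial_lift \<beta> (XX n) (YY n) (PP n)" "XX 0 = X" "PP 0 = p"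
    and "\<And>n. XX n \<subseteq> XX (Suc n)" "\<And>n. YY n \<subseteq> YY (Suc n)"
    and "\<And>n x. x \<in> gen \<sigma> V (XX n) \<Longrightarrow> PP (Suc n) x = PP n x"
    and "\<And>n. n \<in> univ V \<Longrightarrow> n \<in> XX (Suc n) \<and> n \<in> YY (Suc n)"
proof -
  define P where "P n = (\<lambda>(X', Y', p'). partial_lift \<beta> X' Y' p' \<and> (n = 0 \<longrightarrow> (X', Y', p') = (X, Y, p)))"
    for n :: nat
  define Q where "Q n = (\<lambda>(X', Y', p' :: nat \<Rightarrow> nat) (X'', Y'', p''). X' \<subseteq> X'' \<and> Y' \<subseteq> Y'' \<and>
      (\<forall>x\<in>gen \<sigma> V X'. p'' x = p' x) \<and> (n \<in> univ V \<longrightarrow> n \<in> X'' \<and> n \<in> Y''))"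
    for n
  have "\<exists>s. \<forall>n. P n (s n) \<and> Q n (s n) (s (Suc n))"
  proof (rule dependent_nat_choice)
    show "\<exists>s. P 0 s" using p by (auto simp: P_def)
  next
    fix s n assume "P n s"
    then obtain X' Y' p' where s: "s = (X', Y', p')" "partial_lift \<beta> X' Y' p'"
      by (auto simp: P_def split: prod.splits)
    show "\<exists>s'. P (Suc n) s' \<and> Q n s s'"
    proof (cases "n \<in> univ V")
      case True
      then show ?thesis
        using partial_lift_back_and_forth[OF \<beta> s(2)] by (fastforce simp: s(1) P_def Q_def)
    qed (use s in \<open>intro exI[of _ s], simp add: P_def Q_def\<close>)
  qed
  then obtain s where s: "\<And>n. P n (s n)" "\<And>n. Q n (s n) (s (Suc n))" by blast
  define XX YY PP where "XX n = fst (s n)" and "YY n = fst (snd (s n))" and "PP n = snd (snd (s n))"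
    for n
  have s_eq: "s n = (XX n, YY n, PP n)" for n by (simp add: XX_def YY_def PP_def)
  show thesis
  proof (rule that)
    show "partial_lift \<beta> (XX n) (YY n) (PP n)" for n using s(1)[of n] by (simp add: s_eq P_def)
    show "XX 0 = X" "PP 0 = p" using s(1)[of 0] by (simp_all add: s_eq P_def)
  qed (use s(2) in \<open>simp_all add: s_eq Q_def\<close>)
qed

lemma partial_lift_extends_to_Aut:
  assumes \<beta>: "\<beta> \<in> Aut \<sigma> T" and p: "partial_lift \<beta> X Y p"
  shows "\<exists>\<alpha>\<in>Aut \<sigma> V. \<forall>x\<in>gen \<sigma> V X. \<alpha> x = p x"
proof -
  obtain XX YY PP where lift: "\<And>n. partial_lift \<beta> (XX n) (YY n) (PP n)" and start: "XX 0 = X" "PP 0 = p"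
    and step: "\<And>n. XX n \<subseteq> XX (Suc n)" "\<And>n. YY n \<subseteq> YY (Suc n)"
      "\<And>n x. x \<in> gen \<sigma> V (XX n) \<Longrightarrow> PP (Suc n) x = PP n x"
      "\<And>n. n \<in> univ V \<Longrightarrow> n \<in> XX (Suc n) \<and> n \<in> YY (Suc n)"
    using partial_lift_chain[OF \<beta> p] by blast
  note lD = partial_liftD[OF lift]
  have exhaust: "(\<Union>n. gen \<sigma> V (Z n)) = univ V"
    if "\<And>n. Z n \<subseteq> univ V" "\<And>n. n \<in> univ V \<Longrightarrow> n \<in> Z (Suc n)" for Z
  proof
    show "(\<Union>n. gen \<sigma> V (Z n)) \<subseteq> univ V" using gen_subset_univ[OF V_struc that(1)] by blast
    show "univ V \<subseteq> (\<Union>n. gen \<sigma> V (Z n))" using subset_gen[OF V_struc that(1)] that(2) by blast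
  qed
  have "\<exists>\<alpha>\<in>Aut \<sigma> V. \<forall>n. \<forall>x\<in>gen \<sigma> V (XX n). \<alpha> x = PP n x"
  proof (rule Aut_of_iso_chain[OF V_struc lD(5)])
    show "gen \<sigma> V (XX n) \<subseteq> gen \<sigma> V (XX (Suc n))" for n
      using gen_mono[OF V_struc step(1) lD(2)] .
    show "(\<Union>n. gen \<sigma> V (XX n)) = univ V" "(\<Union>n. gen \<sigma> V (YY n)) = univ V"
      using exhaust[of XX, OF lD(2)] exhaust[of YY, OF lD(4)] step(4) by auto
  qed (fact step(3))
  then show ?thesis using start by auto
qed

end

subsection \<open>Counting orbits\<close>

context universal_homogeneous_hom
begin

lemma emb_gen_sub_into_limit:
  assumes "age_is \<sigma> M C" "finite X" "X \<subseteq> univ V"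
  shows "\<exists>\<phi>. emb \<sigma> (gen_sub \<sigma> V X) M \<phi>"
proof -
  obtain D h where D: "D \<in> C" "iso \<sigma> (gen_sub \<sigma> V X) D h"
    using V_cbar assms(2,3) unfolding cbar_def in_cls_def isomorphic_def by blast
  obtain e where "emb \<sigma> D M e" using assms(1) D(1) unfolding age_is_def by blast
  then show ?thesis using emb_comp[of \<sigma> _ D h M e] D(2) unfolding iso_def by blast
qed

lemma orbit_eq_if_types_eq:
  assumes a: "set a \<subseteq> univ V" and b: "set b \<subseteq> univ V"
    and len: "length a = length b"
    and LA: "set (a @ la) = gen \<sigma> V (set a)" and LB: "set (b @ lb) = gen \<sigma> V (set b)"
    and \<phi>A: "emb \<sigma> (gen_sub \<sigma> V (set a)) M \<phi>A" and \<phi>B: "emb \<sigma> (gen_sub \<sigma> V (set b)) M \<phi>B"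
    and g: "g \<in> Aut \<sigma> M" "map (g \<circ> \<phi>A) (a @ la) = map \<phi>B (b @ lb)"
    and \<beta>: "\<beta> \<in> Aut \<sigma> T" "map (\<beta> \<circ> u) (a @ la) = map u (b @ lb)"
  shows "orbit (Aut \<sigma> V) b = orbit (Aut \<sigma> V) a"
proof -
  let ?h = "inv_into (gen \<sigma> V (set b)) \<phi>B \<circ> (g \<circ> \<phi>A)"
  have B: "is_struc \<sigma> (restr V (gen \<sigma> V (set b)))"
    using is_struc_restr[OF closed_set_gen[OF V_struc b]] .
  note h = iso_through_Aut[OF B \<phi>A[unfolded gen_sub_def] \<phi>B[unfolded gen_sub_def] g(1) _ _ g(2)]
  have h_iso: "iso \<sigma> (gen_sub \<sigma> V (set a)) (gen_sub \<sigma> V (set b)) ?h"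
    and h_map: "map ?h (a @ la) = b @ lb"
    using h LA LB by (simp_all add: gen_sub_def)
  have "map (u \<circ> ?h) (a @ la) = map (\<beta> \<circ> u) (a @ la)"
    using h_map \<beta>(2) by (metis map_map)
  then have "\<forall>x\<in>gen \<sigma> V (set a). u (?h x) = \<beta> (u x)" unfolding LA[symmetric] map_eq_conv by simp
  then have "partial_lift \<beta> (set a) (set b) ?h"
    using a b h_iso unfolding partial_lift_def by simp
  then obtain \<alpha> where \<alpha>: "\<alpha> \<in> Aut \<sigma> V" "\<forall>x\<in>gen \<sigma> V (set a). \<alpha> x = ?h x"
    using partial_lift_extends_to_Aut[OF \<beta>(1)] by blast
  have "map \<alpha> a = map ?h a" using \<alpha>(2) subset_gen[OF V_struc a] by (auto simp: map_eq_conv)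
  moreover have "map ?h a = b" using h_map len by (simp add: append_eq_append_conv)
  ultimately have "map \<alpha> a = b" by simp
  then show ?thesis using orbit_Aut_map[OF V_struc \<alpha>(1) a] by simp
qed

lemma card_gen_bounded:
  assumes M: "is_struc \<sigma> M" "age_is \<sigma> M C" "locally_finite \<sigma> M" "oligomorphic (univ M) (Aut \<sigma> M)"
    and n: "n \<ge> 1"
  shows "\<exists>K. \<forall>a\<in>tuples (univ V) n. finite (gen \<sigma> V (set a)) \<and> card (gen \<sigma> V (set a)) \<le> K"
proof -
  have "\<exists>K. \<forall>c\<in>tuples (univ M) n. card (gen \<sigma> M (set c)) \<le> K"
    by (rule oligomorphic_bounded_invariant[OF M(4) id_Aut n], rule card_gen_Aut_map[OF M(1)]) auto
  then obtain K where K: "\<forall>c\<in>tuples (univ M) n. card (gen \<sigma> M (set c)) \<le> K" ..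
  have "finite (gen \<sigma> V (set a)) \<and> card (gen \<sigma> V (set a)) \<le> K" if a: "a \<in> tuples (univ V) n" for a
  proof -
    obtain \<phi> where \<phi>: "emb \<sigma> (gen_sub \<sigma> V (set a)) M \<phi>"
      using emb_gen_sub_into_limit[OF M(2), of "set a"] a by auto
    have img: "\<phi> ` gen \<sigma> V (set a) = gen \<sigma> M (set (map \<phi> a))"
      using emb_gen_sub_image[OF V_struc M(1) _ \<phi>] a by simp
    have inj: "inj_on \<phi> (gen \<sigma> V (set a))" using \<phi> by (simp add: emb_def gen_sub_def)
    have "\<forall>x\<in>gen \<sigma> V (set a). \<phi> x \<in> univ M" using \<phi> by (simp add: emb_def hom_def gen_sub_def)
    then have "map \<phi> a \<in> tuples (univ M) n" using a subset_gen[OF V_struc, of "set a"] by auto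
    then have "finite (gen \<sigma> M (set (map \<phi> a)))" "card (gen \<sigma> M (set (map \<phi> a))) \<le> K"
      using M(3) K[rule_format, of "map \<phi> a"] unfolding locally_finite_def by simp_all
    then show ?thesis using img card_image[OF inj] finite_image_iff[OF inj] by simp
  qed
  then show ?thesis by blast
qed

lemma finite_orbits:
  assumes M: "is_struc \<sigma> M" "age_is \<sigma> M C" "locally_finite \<sigma> M" "oligomorphic (univ M) (Aut \<sigma> M)"
    and T: "oligomorphic (univ T) (Aut \<sigma> T)" and n: "n \<ge> 1"
  shows "finite (orbit (Aut \<sigma> V) ` tuples (univ V) n)"
proof -
  obtain K where K: "\<And>a. a \<in> tuples (univ V) n \<Longrightarrow> finite (gen \<sigma> V (set a)) \<and> card (gen \<sigma> V (set a)) \<le> K"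
    using card_gen_bounded[OF M n] by blast
  define L where "L a = a @ sorted_list_of_set (gen \<sigma> V (set a))" for a
  have L: "set (L a) = gen \<sigma> V (set a)" "length (L a) \<in> {n..n + K}" if a: "a \<in> tuples (univ V) n" for a
    using K[OF a] subset_gen[OF V_struc, of "set a"] a by (auto simp: L_def)
  define type where "type a t \<longleftrightarrow>
      (\<exists>\<phi>. emb \<sigma> (gen_sub \<sigma> V (set a)) M \<phi> \<and> t = (orbit (Aut \<sigma> M) (map \<phi> (L a)), orbit (Aut \<sigma> T) (map u (L a))))"
    for a t
  let ?S = "(\<Union>m\<in>{n..n + K}. orbit (Aut \<sigma> M) ` tuples (univ M) m) \<times>
    (\<Union>m\<in>{n..n + K}. orbit (Aut \<sigma> T) ` tuples (univ T) m)"
  show ?thesis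
  proof (rule finite_image_classified[where P = type])
    show "finite ?S" using M(4) T n by (auto simp: oligomorphic_iff_orbit)
  next
    fix a assume a: "a \<in> tuples (univ V) n"
    then obtain \<phi> where \<phi>: "emb \<sigma> (gen_sub \<sigma> V (set a)) M \<phi>"
      using emb_gen_sub_into_limit[OF M(2), of "set a"] by auto
    have "\<forall>x\<in>gen \<sigma> V (set a). \<phi> x \<in> univ M" using \<phi> by (simp add: emb_def hom_def gen_sub_def)
    then have "map \<phi> (L a) \<in> tuples (univ M) (length (L a))" using L(1)[OF a] by auto
    moreover have "map u (L a) \<in> tuples (univ T) (length (L a))"
      using L(1)[OF a] gen_subset_univ[OF V_struc, of "set a"] a u_into by auto
    ultimately show "\<exists>t\<in>?S. type a t" using L(2)[OF a] \<phi> unfolding type_def by blast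
  next
    fix a b t assume a: "a \<in> tuples (univ V) n" and b: "b \<in> tuples (univ V) n"
      and "type a t" "type b t"
    then obtain \<phi>A \<phi>B where \<phi>: "emb \<sigma> (gen_sub \<sigma> V (set a)) M \<phi>A" "emb \<sigma> (gen_sub \<sigma> V (set b)) M \<phi>B"
      and orbits: "orbit (Aut \<sigma> M) (map \<phi>A (L a)) = orbit (Aut \<sigma> M) (map \<phi>B (L b))"
        "orbit (Aut \<sigma> T) (map u (L a)) = orbit (Aut \<sigma> T) (map u (L b))"
      unfolding type_def by auto
    have "map \<phi>B (L b) \<in> orbit (Aut \<sigma> M) (map \<phi>A (L a))"
      "map u (L b) \<in> orbit (Aut \<sigma> T) (map u (L a))"
      using orbits in_orbit_Aut by metis+
    then obtain g \<beta> where g: "g \<in> Aut \<sigma> M" "map (g \<circ> \<phi>A) (L a) = map \<phi>B (L b)"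
      and \<beta>: "\<beta> \<in> Aut \<sigma> T" "map (\<beta> \<circ> u) (L a) = map u (L b)"
      unfolding orbit_def by auto
    show "orbit (Aut \<sigma> V) a = orbit (Aut \<sigma> V) b"
      using orbit_eq_if_types_eq[of a b, OF _ _ _ _ _ \<phi> g[unfolded L_def] \<beta>[unfolded L_def]]
        a b L(1)[OF a] L(1)[OF b] unfolding L_def by auto
  qed
qed

end

theorem proposition3p6:
  fixes \<sigma> :: "('r, 'f) signature"
    and U C :: "('r, 'f) struc set"
    and V T :: "('r, 'f) struc"
    and u :: "nat \<Rightarrow> nat"
  assumes "age_class \<sigma> U"
    and "fraisse_class \<sigma> C"
    and "\<forall>A\<in>C. in_cls \<sigma> U A"
    and "\<exists>M. fraisse_limit \<sigma> C M \<and> locally_finite \<sigma> M \<and> oligomorphic (univ M) (Aut \<sigma> M)"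
    and "cbar \<sigma> U T"
    and "universal_hom \<sigma> C V T u"
    and "homogeneous_hom \<sigma> V T u"
    and "oligomorphic (univ T) (Aut \<sigma> T)"
  shows "oligomorphic (univ V) (Aut \<sigma> V)"
proof -
  obtain M where M: "fraisse_limit \<sigma> C M" "locally_finite \<sigma> M" "oligomorphic (univ M) (Aut \<sigma> M)"
    using assms(4) by blast
  interpret universal_homogeneous_hom \<sigma> C V T u
    using assms(6,7) by unfold_locales
  have "is_struc \<sigma> M" "age_is \<sigma> M C" using M(1) unfolding fraisse_limit_def by auto
  then show ?thesis
    using finite_orbits M(2,3) assms(8) unfolding oligomorphic_iff_orbit by simp
qed
end
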